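(* For $\lambda\in\mathbb R$ let $r_\lambda(x,y)=(x^2-y^2)^3+15\lambda x^2y^2(x^2-y^2)$. Then $r_0$ has unique signature $(3,3)$, $r_{1/5}=x^6-y^6$ has unique signature $(1,1)$, and for every $\lambda$ with $0<\lambda<\tfrac15$, $r_\lambda$ has unique signature $(2,2)$.
   Context: A representation of a real binary sextic $p$ is an expression $p=\sum_{j=1}^r\lambda_j(\alpha_jx+\beta_jy)^{6}$ with $r\ge0$, $\alpha_j,\beta_j\in\mathbb R$, $0\ne\lambda_j\in\mathbb R$; it is honest if the linear forms $\alpha_jx+\beta_jy$ are pairwise non-proportional. Its badge is $(a,b)$ where $a=\#\{j:\lambda_j>0\}$, $b=\#\{j:\lambda_j<0\}$; $\mathcal B(p)$ is the set of badges of honest representations. With $(a,b)\preceq(c,d)$ iff $a\le c,b\le d$, a signature is a minimal element of $\mathcal B(p)$; $p$ has unique signature $(u,v)$ if $(u,v)$ is the only minimal element. *)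

theory Defs
  imports Complex_Main
begin

text \<open>A binary real form is modelled as its polynomial function of two real variables.
  A term of a representation is a triple (lambda, alpha, beta), standing for
  lambda * (alpha x + beta y)^6.\<close>

type_synonym term6 = "real \<times> real \<times> real"

definition represents :: "(real \<Rightarrow> real \<Rightarrow> real) \<Rightarrow> term6 list \<Rightarrow> bool" where
  "represents p ts \<longleftrightarrow>
     (\<forall>t\<in>set ts. fst t \<noteq> 0) \<and>
     (\<forall>x y. p x y = (\<Sum>t\<leftarrow>ts. fst t * (fst (snd t) * x + snd (snd t) * y) ^ 6))"

text \<open>Linear forms alpha x + beta y are proportional iff the 2x2 determinant vanishes.\<close>
definition honest :: "term6 list \<Rightarrow> bool" where
  "honest ts \<longleftrightarrow>
     (\<forall>i j. i < length ts \<and> j < length ts \<and> i \<noteq> j \<longrightarrow>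
        fst (snd (ts ! i)) * snd (snd (ts ! j)) \<noteq> fst (snd (ts ! j)) * snd (snd (ts ! i)))"

definition badge :: "term6 list \<Rightarrow> nat \<times> nat" where
  "badge ts = (length (filter (\<lambda>t. fst t > 0) ts), length (filter (\<lambda>t. fst t < 0) ts))"

definition badges :: "(real \<Rightarrow> real \<Rightarrow> real) \<Rightarrow> (nat \<times> nat) set" where
  "badges p = {badge ts | ts. represents p ts \<and> honest ts}"

definition badge_le :: "nat \<times> nat \<Rightarrow> nat \<times> nat \<Rightarrow> bool" where
  "badge_le ab cd \<longleftrightarrow> fst ab \<le> fst cd \<and> snd ab \<le> snd cd"

definition signatures :: "(real \<Rightarrow> real \<Rightarrow> real) \<Rightarrow> (nat \<times> nat) set" where
  "signatures p = {s \<in> badges p. \<forall>s'\<in>badges p. badge_le s' s \<longrightarrow> s' = s}"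

definition has_unique_signature :: "(real \<Rightarrow> real \<Rightarrow> real) \<Rightarrow> nat \<times> nat \<Rightarrow> bool" where
  "has_unique_signature p s \<longleftrightarrow> signatures p = {s}"

definition r_lam :: "real \<Rightarrow> real \<Rightarrow> real \<Rightarrow> real" where
  "r_lam l x y = (x^2 - y^2)^3 + 15 * l * x^2 * y^2 * (x^2 - y^2)"

end

theory Submission
  imports Defs
begin

(* Write a representation of a binary sextic p as p = sum_j c_j (a_j x + b_j y)^6.  Its
   "moments" M_m = sum_j c_j a_j^m b_j^(6-m) are determined by p: up to binomial factors
   they are the coefficients of p.  Hence for a binary cubic f the weighted sum
   sum_j c_j f(a_j, b_j)^2 equals a quadratic form Q_l(f) depending only on p = r_lam l.
   Lower bounds: if every k-1 pairwise non-proportional points are zeros of some cubic f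
   with Q_l(f) > 0, then every honest representation has at least k positive terms
   (take f vanishing at the points of the positive terms; the sum is then <= 0).  Since
   r_lam l (y, x) = - r_lam l (x, y), swapping the variables and negating the weights turns
   this into the same bound for negative terms.  Such cubics exist for k = 3 (l = 0),
   k = 2 (0 < l < 1/5) and k = 1 (l = 1/5).
   Upper bounds: explicit honest representations with badges (3,3), (2,2), (1,1); the ones
   for l < 1/5 pair each term (x + t y)^6 with -(t x + y)^6.
   A badge below every badge of p is the unique signature, which gives the theorem. *)

definition moment :: "term6 list \<Rightarrow> nat \<Rightarrow> real" where
  "moment ts m = (\<Sum>t\<leftarrow>ts. fst t * fst (snd t) ^ m * snd (snd t) ^ (6 - m))"

lemma moment_Nil [simp]: "moment [] m = 0"
  by (simp add: moment_def)

lemma moment_Cons [simp]: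
  "moment (t # ts) m = fst t * fst (snd t) ^ m * snd (snd t) ^ (6 - m) + moment ts m"
  by (simp add: moment_def)

lemma sum_of_powers_expand:
  "(\<Sum>t\<leftarrow>ts. fst t * (fst (snd t) * x + snd (snd t)) ^ 6) =
   (\<Sum>m\<le>6. (of_nat (6 choose m) * moment ts m) * x ^ m)"
proof (induction ts)
  case (Cons t ts)
  obtain c a b where t: "t = (c, a, b)"
    by (cases t) auto
  have "c * (a * x + b) ^ 6 = (\<Sum>m\<le>6. (of_nat (6 choose m) * (c * a ^ m * b ^ (6 - m))) * x ^ m)"
    unfolding binomial_ring[of "a * x" b 6] sum_distrib_left by (simp add: power_mult_distrib ac_simps)
  then show ?case
    using Cons by (simp add: t algebra_simps sum.distrib)
qed simp

lemma moments_r_lam: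
  assumes "represents (r_lam l) ts"
  shows "moment ts 0 = -1" "moment ts 1 = 0" "moment ts 2 = 1/5 - l" "moment ts 3 = 0"
    "moment ts 4 = l - 1/5" "moment ts 5 = 0" "moment ts 6 = 1"
proof -
  define c :: "nat \<Rightarrow> real" where
    "c m = (if m = 0 then -1 else if m = 2 then 3 - 15*l else if m = 4 then 15*l - 3
            else if m = 6 then 1 else 0)" for m
  have "\<forall>x. (\<Sum>m\<le>6. (of_nat (6 choose m) * moment ts m) * x ^ m) = (\<Sum>m\<le>6. c m * x ^ m)"
  proof
    fix x :: real
    have "(\<Sum>m\<le>6. (of_nat (6 choose m) * moment ts m) * x ^ m) = r_lam l x 1"
      using assms sum_of_powers_expand[where ts=ts and x=x] by (simp add: represents_def)
    also have "\<dots> = (\<Sum>m\<le>6. c m * x ^ m)"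
      unfolding r_lam_def c_def by (simp add: eval_nat_numeral atMost_Suc) algebra
    finally show "(\<Sum>m\<le>6. (of_nat (6 choose m) * moment ts m) * x ^ m) = (\<Sum>m\<le>6. c m * x ^ m)" .
  qed
  then have coeff: "\<forall>m\<le>6. of_nat (6 choose m) * moment ts m = c m"
    by (simp only: polyfun_eq_coeffs)
  have binomials: "(6::nat) choose 1 = 6" "(6::nat) choose 2 = 15" "(6::nat) choose 3 = 20"
    "(6::nat) choose 4 = 15" "(6::nat) choose 5 = 6"
    by (simp_all add: eval_nat_numeral)
  show "moment ts 0 = -1" "moment ts 1 = 0" "moment ts 2 = 1/5 - l" "moment ts 3 = 0"
    "moment ts 4 = l - 1/5" "moment ts 5 = 0" "moment ts 6 = 1"
    using coeff[rule_format, of 0] coeff[rule_format, of 1] coeff[rule_format, of 2]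
      coeff[rule_format, of 3] coeff[rule_format, of 4] coeff[rule_format, of 5] coeff[rule_format, of 6]
    by (simp_all add: c_def binomials)
qed

definition cubic :: "real \<Rightarrow> real \<Rightarrow> real \<Rightarrow> real \<Rightarrow> real \<Rightarrow> real \<Rightarrow> real" where
  "cubic f0 f1 f2 f3 a b = f0 * b^3 + f1 * a * b^2 + f2 * a^2 * b + f3 * a^3"

lemma cubic_origin [simp]: "cubic f0 f1 f2 f3 0 0 = 0"
  by (simp add: cubic_def)

lemma weighted_cubic_squares:
  "(\<Sum>t\<leftarrow>ts. fst t * cubic f0 f1 f2 f3 (fst (snd t)) (snd (snd t)) ^ 2) =
     f0^2 * moment ts 0 + 2*f0*f1 * moment ts 1 + (2*f0*f2 + f1^2) * moment ts 2
   + (2*f0*f3 + 2*f1*f2) * moment ts 3 + (2*f1*f3 + f2^2) * moment ts 4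
   + 2*f2*f3 * moment ts 5 + f3^2 * moment ts 6"
proof (induction ts)
  case (Cons t ts)
  obtain c a b where t: "t = (c, a, b)"
    by (cases t) auto
  have "c * cubic f0 f1 f2 f3 a b ^ 2 =
      f0^2 * (c*b^6) + 2*f0*f1 * (c*a*b^5) + (2*f0*f2 + f1^2) * (c*a^2*b^4)
    + (2*f0*f3 + 2*f1*f2) * (c*a^3*b^3) + (2*f1*f3 + f2^2) * (c*a^4*b^2)
    + 2*f2*f3 * (c*a^5*b) + f3^2 * (c*a^6)"
    unfolding cubic_def by algebra
  then show ?case
    using Cons by (simp add: t algebra_simps)
qed simp

(* The quadratic form on cubics induced by the moments of r_lam l. *)
definition qform :: "real \<Rightarrow> real \<Rightarrow> real \<Rightarrow> real \<Rightarrow> real \<Rightarrow> real" where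
  "qform l f0 f1 f2 f3 =
     (2*f0*f2 + f1^2) * (1/5 - l) - f0^2 + (2*f1*f3 + f2^2) * (l - 1/5) + f3^2"

lemma weighted_cubic_squares_r_lam:
  assumes "represents (r_lam l) ts"
  shows "(\<Sum>t\<leftarrow>ts. fst t * cubic f0 f1 f2 f3 (fst (snd t)) (snd (snd t)) ^ 2) = qform l f0 f1 f2 f3"
  unfolding weighted_cubic_squares moments_r_lam[OF assms] qform_def by simp

definition nonproportional :: "(real \<times> real) set \<Rightarrow> bool" where
  "nonproportional S \<longleftrightarrow> (\<forall>u\<in>S. \<forall>v\<in>S. u \<noteq> v \<longrightarrow> fst u * snd v \<noteq> fst v * snd u)"

lemma honest_iff:
  "honest ts \<longleftrightarrow> distinct (map snd ts) \<and> nonproportional (snd ` set ts)"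
proof
  assume "honest ts"
  then have det: "fst (snd (ts ! i)) * snd (snd (ts ! j)) \<noteq> fst (snd (ts ! j)) * snd (snd (ts ! i))"
    if "i < length ts" "j < length ts" "i \<noteq> j" for i j
    using that unfolding honest_def by blast
  have "distinct (map snd ts)"
    unfolding distinct_conv_nth using det by fastforce
  moreover have "nonproportional (snd ` set ts)"
    unfolding nonproportional_def
  proof (intro ballI impI)
    fix u v
    assume "u \<in> snd ` set ts" "v \<in> snd ` set ts" "u \<noteq> v"
    then obtain i j where "i < length ts" "j < length ts" "u = snd (ts ! i)" "v = snd (ts ! j)"
      by (auto simp: in_set_conv_nth)
    with \<open>u \<noteq> v\<close> show "fst u * snd v \<noteq> fst v * snd u"
      using det by blast
  qed
  ultimately show "distinct (map snd ts) \<and> nonproportional (snd ` set ts)" ..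
next
  assume "distinct (map snd ts) \<and> nonproportional (snd ` set ts)"
  then show "honest ts"
    unfolding honest_def nonproportional_def distinct_conv_nth
    by (metis image_eqI length_map nth_map nth_mem)
qed

lemma nonproportional_subset: "nonproportional T \<Longrightarrow> S \<subseteq> T \<Longrightarrow> nonproportional S"
  unfolding nonproportional_def by blast

definition cubic_witnesses :: "real \<Rightarrow> nat \<Rightarrow> bool" where
  "cubic_witnesses l k \<longleftrightarrow>
     (\<forall>S. finite S \<and> card S < k \<and> nonproportional S \<longrightarrow>
        (\<exists>f0 f1 f2 f3. (\<forall>u\<in>S. cubic f0 f1 f2 f3 (fst u) (snd u) = 0) \<and> qform l f0 f1 f2 f3 > 0))"

lemma positive_terms_lower_bound:
  assumes rep: "represents (r_lam l) ts" and hon: "honest ts" and wit: "cubic_witnesses l k"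
  shows "k \<le> fst (badge ts)"
proof (rule ccontr)
  assume "\<not> k \<le> fst (badge ts)"
  define pos where "pos = filter (\<lambda>t. fst t > 0) ts"
  define S where "S = snd ` set pos"
  have "card S \<le> length pos"
    unfolding S_def using card_image_le card_length le_trans by blast
  then have "card S < k"
    using \<open>\<not> k \<le> fst (badge ts)\<close> by (simp add: badge_def pos_def)
  moreover have "nonproportional S"
    using hon nonproportional_subset[of "snd ` set ts" S] unfolding honest_iff S_def pos_def by auto
  ultimately obtain f0 f1 f2 f3 where
    vanish: "\<forall>u\<in>S. cubic f0 f1 f2 f3 (fst u) (snd u) = 0" and q: "qform l f0 f1 f2 f3 > 0"
    using wit unfolding cubic_witnesses_def S_def by blast
  have "fst t * cubic f0 f1 f2 f3 (fst (snd t)) (snd (snd t)) ^ 2 \<le> 0" if "t \<in> set ts" for t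
  proof (cases "fst t > 0")
    case True
    then have "snd t \<in> S"
      using that by (auto simp: S_def pos_def)
    then show ?thesis
      using vanish by auto
  next
    case False
    then show ?thesis
      by (simp add: mult_nonpos_nonneg)
  qed
  then have "(\<Sum>t\<leftarrow>ts. fst t * cubic f0 f1 f2 f3 (fst (snd t)) (snd (snd t)) ^ 2) \<le> 0"
    by (induction ts) (auto simp: add_nonpos_nonpos)
  then show False
    using q weighted_cubic_squares_r_lam[OF rep] by simp
qed

definition mirror :: "term6 list \<Rightarrow> term6 list" where
  "mirror ts = map (\<lambda>t. (- fst t, snd (snd t), fst (snd t))) ts"

lemma represents_mirror:
  assumes "represents p ts"
  shows "represents (\<lambda>x y. - p y x) (mirror ts)"
proof -
  have "(\<Sum>t\<leftarrow>mirror ts. fst t * (fst (snd t) * x + snd (snd t) * y) ^ 6) =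
        - (\<Sum>t\<leftarrow>ts. fst t * (fst (snd t) * y + snd (snd t) * x) ^ 6)" for x y
    unfolding mirror_def by (induction ts) (simp_all add: algebra_simps)
  then show ?thesis
    using assms unfolding represents_def mirror_def by auto
qed

lemma honest_mirror: "honest ts \<Longrightarrow> honest (mirror ts)"
  unfolding honest_def mirror_def by (auto simp: mult.commute)

lemma badge_mirror: "badge (mirror ts) = (snd (badge ts), fst (badge ts))"
  unfolding badge_def mirror_def by (simp add: comp_def)

lemma r_lam_antisymmetric: "(\<lambda>x y. - r_lam l y x) = r_lam l"
  unfolding r_lam_def by (intro ext) algebra

(* By antisymmetry, the positive bound also bounds the number of negative weights. *)
lemma badge_lower_bound:
  assumes "represents (r_lam l) ts" "honest ts" "cubic_witnesses l k"
  shows "badge_le (k, k) (badge ts)"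
proof -
  have "represents (r_lam l) (mirror ts)"
    using represents_mirror[OF assms(1)] unfolding r_lam_antisymmetric .
  then have "k \<le> fst (badge (mirror ts))"
    using positive_terms_lower_bound honest_mirror assms(2,3) by blast
  moreover have "k \<le> fst (badge ts)"
    using positive_terms_lower_bound assms by blast
  ultimately show ?thesis
    by (simp add: badge_le_def badge_mirror)
qed

(* For l = 1/5 a single positive term is forced: Q_(1/5) is not negative semidefinite. *)
lemma cubic_witnesses_one_fifth: "cubic_witnesses (1/5) 1"
proof -
  have "qform (1/5) 0 0 0 1 > 0"
    by (simp add: qform_def)
  moreover have "S = {}" if "card S < 1" "finite S" for S :: "(real \<times> real) set"
    using that by simp
  ultimately show ?thesis
    unfolding cubic_witnesses_def by blast
qed

lemma card_less_two_subset:
  assumes "finite S" "card S < 2"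
  obtains u where "S \<subseteq> {u}"
proof (cases "S = {}")
  case False
  then obtain u where "u \<in> S"
    by blast
  moreover have "\<forall>v\<in>S. \<forall>w\<in>S. v = w"
    using assms card_le_Suc0_iff_eq[OF assms(1)] by simp
  ultimately show ?thesis
    using that by blast
qed (use that in blast)

(* For 0 <= l < 1/5 the cubic a^2 x y^2 - b^2 x^3 through (a, b) has Q_l > 0. *)
lemma cubic_witnesses_interior:
  assumes "0 \<le> l" "l < 1/5"
  shows "cubic_witnesses l 2"
  unfolding cubic_witnesses_def
proof (intro allI impI, elim conjE)
  fix S :: "(real \<times> real) set"
  assume "finite S" "card S < 2"
  then obtain a b where S: "S \<subseteq> {(a, b)}"
    using card_less_two_subset[of S] by auto
  define c where "c = 1/5 - l"
  have c: "0 < c" "c < 1"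
    using assms by (auto simp: c_def)
  have q: "qform l 0 f1 0 f3 = c * (f1 - f3)^2 + (1 - c) * f3^2" for f1 f3
    unfolding qform_def c_def by (simp add: power2_eq_square algebra_simps)
  show "\<exists>f0 f1 f2 f3. (\<forall>u\<in>S. cubic f0 f1 f2 f3 (fst u) (snd u) = 0) \<and> qform l f0 f1 f2 f3 > 0"
  proof (cases "a = 0 \<and> b = 0")
    case True
    then have "\<forall>u\<in>S. cubic 0 1 0 0 (fst u) (snd u) = 0"
      using S by auto
    moreover have "qform l 0 1 0 0 > 0"
      using q[of 1 0] c by simp
    ultimately show ?thesis
      by blast
  next
    case False
    then have "(a^2 + b^2)^2 > 0"
      by (simp add: sum_power2_gt_zero_iff)
    then have "qform l 0 (a^2) 0 (- (b^2)) > 0"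
      using q[of "a^2" "- (b^2)"] c by (simp add: add_pos_nonneg)
    moreover have "cubic 0 (a^2) 0 (- (b^2)) a b = 0"
      unfolding cubic_def by algebra
    then have "\<forall>u\<in>S. cubic 0 (a^2) 0 (- (b^2)) (fst u) (snd u) = 0"
      using S by auto
    ultimately show ?thesis
      by blast
  qed
qed

lemma indefinite_binary_quadratic:
  fixes A B C :: real
  assumes "B^2 > A * C"
  shows "\<exists>h k. A * h^2 + 2 * B * h * k + C * k^2 > 0"
proof -
  consider "A > 0" | "C > 0" | "A < 0" | "A = 0" "C \<le> 0"
    by linarith
  then show ?thesis
  proof cases
    case 1
    then show ?thesis by (intro exI[of _ 1] exI[of _ 0]) simp
  next
    case 2
    then show ?thesis by (intro exI[of _ 0] exI[of _ 1]) simp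
  next
    case 3
    have "A * B^2 + 2 * B * B * (- A) + C * (- A)^2 = A * (A * C - B^2)"
      by algebra
    also have "\<dots> > 0"
      using 3 assms by (intro mult_neg_neg) auto
    finally show ?thesis by blast
  next
    case 4
    then have "B \<noteq> 0"
      using assms by auto
    then have "A * ((1 - C) / (2 * B))^2 + 2 * B * ((1 - C) / (2 * B)) * 1 + C * 1^2 = 1"
      using 4 by (simp add: field_simps)
    then show ?thesis
      by (metis zero_less_one)
  qed
qed

(* Through two non-proportional points, the pencil (h x + k y) g of cubics, with g the
   quadratic vanishing at both, contains one with Q_0 > 0: Q_0 is indefinite on it. *)
lemma two_point_cubic:
  fixes a1 b1 a2 b2 :: real
  assumes "a1 * b2 \<noteq> a2 * b1"
  shows "\<exists>f0 f1 f2 f3. cubic f0 f1 f2 f3 a1 b1 = 0 \<and> cubic f0 f1 f2 f3 a2 b2 = 0 \<and> qform 0 f0 f1 f2 f3 > 0"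
proof -
  define g0 g1 g2 where "g0 = a1 * a2" and "g1 = - (a1 * b2 + a2 * b1)" and "g2 = b1 * b2"
  define Q where "Q h k = qform 0 (k*g0) (h*g0 + k*g1) (h*g1 + k*g2) (h*g2)" for h k
  define A C where "A = Q 1 0" and "C = Q 0 1"
  define B where "B = (Q 1 1 - A - C) / 2"
  have Q: "Q h k = A * h^2 + 2 * B * h * k + C * k^2" for h k
    unfolding A_def B_def C_def Q_def qform_def by (simp add: field_simps) algebra
  define X Y where "X = (a1-b1)*(a2-b2)*(a1+b1)*(a2+b2)" and "Y = (a1-b1)*(a2+b2) + (a2-b2)*(a1+b1)"
  have disc: "B^2 - A * C = (4*X^2 + Y^4) / 100"
    unfolding A_def B_def C_def Q_def qform_def X_def Y_def g0_def g1_def g2_def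
    by (simp add: field_simps) algebra
  have "(2 * (a1*b2 - a2*b1))^2 = Y^2 - 4*X"
    unfolding X_def Y_def by algebra
  then have "X \<noteq> 0 \<or> Y \<noteq> 0"
    using assms by auto
  then have "4*X^2 + Y^4 > 0"
    by (auto simp: add_pos_nonneg add_nonneg_pos)
  then obtain h k where "Q h k > 0"
    using disc Q indefinite_binary_quadratic[of A C B] by auto
  moreover have "cubic (k*g0) (h*g0 + k*g1) (h*g1 + k*g2) (h*g2) a1 b1 = 0"
                "cubic (k*g0) (h*g0 + k*g1) (h*g1 + k*g2) (h*g2) a2 b2 = 0"
    unfolding cubic_def g0_def g1_def g2_def by algebra+
  ultimately show ?thesis
    unfolding Q_def by blast
qed

lemma card_less_three_cover:
  assumes "finite S" "card S < 3" "nonproportional S"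
  obtains a1 b1 a2 b2 where "a1 * b2 \<noteq> a2 * b1" "S \<subseteq> {(a1, b1), (a2, b2), (0, 0)}"
proof (cases "card S = 2")
  case True
  then obtain u v where uv: "S = {u, v}" "u \<noteq> v"
    by (auto simp: card_2_iff)
  show ?thesis
  proof (rule that)
    show "fst u * snd v \<noteq> fst v * snd u"
      using assms(3) uv unfolding nonproportional_def by blast
    show "S \<subseteq> {(fst u, snd u), (fst v, snd v), (0, 0)}"
      using uv by auto
  qed
next
  case False
  then obtain u where u: "S \<subseteq> {u}"
    using assms(1,2) card_less_two_subset[of S] by auto
  obtain a b where ab: "u = (a, b)"
    by (cases u)
  show ?thesis
  proof (cases "a = 0 \<and> b = 0")
    case True
    show ?thesis
    proof (rule that)
      show "1 * 1 \<noteq> 0 * (0::real)"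
        by simp
      show "S \<subseteq> {(1, 0), (0, 1), (0, 0)}"
        using u ab True by auto
    qed
  next
    case False
    show ?thesis
    proof (rule that)
      show "a * a \<noteq> (- b) * b"
        using False sum_squares_gt_zero_iff[of a b] by auto
      show "S \<subseteq> {(a, b), (- b, a), (0, 0)}"
        using u ab by auto
    qed
  qed
qed

lemma cubic_witnesses_zero: "cubic_witnesses 0 3"
  unfolding cubic_witnesses_def
proof (intro allI impI, elim conjE)
  fix S :: "(real \<times> real) set"
  assume "finite S" "card S < 3" "nonproportional S"
  then obtain a1 b1 a2 b2 where "a1 * b2 \<noteq> a2 * b1" and S: "S \<subseteq> {(a1, b1), (a2, b2), (0, 0)}"
    by (rule card_less_three_cover)
  then obtain f0 f1 f2 f3 where
    "cubic f0 f1 f2 f3 a1 b1 = 0" "cubic f0 f1 f2 f3 a2 b2 = 0" "qform 0 f0 f1 f2 f3 > 0"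
    using two_point_cubic by blast
  moreover have "\<forall>u\<in>S. cubic f0 f1 f2 f3 (fst u) (snd u) = 0"
    using S calculation(1,2) by auto
  ultimately show "\<exists>f0 f1 f2 f3. (\<forall>u\<in>S. cubic f0 f1 f2 f3 (fst u) (snd u) = 0) \<and> qform 0 f0 f1 f2 f3 > 0"
    by blast
qed

lemma badgesI: "represents p ts \<Longrightarrow> honest ts \<Longrightarrow> badge ts = s \<Longrightarrow> s \<in> badges p"
  unfolding badges_def by blast

lemma unique_signature_intro:
  assumes "s \<in> badges p" and "\<And>ts. represents p ts \<Longrightarrow> honest ts \<Longrightarrow> badge_le s (badge ts)"
  shows "has_unique_signature p s"
proof -
  have below: "badge_le s b" if "b \<in> badges p" for b
    using that assms(2) unfolding badges_def by blast
  have "b = s" if "b \<in> badges p" "badge_le b s" for b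
    using below[OF that(1)] that(2) by (auto simp: badge_le_def prod_eq_iff)
  then show ?thesis
    using assms(1) below unfolding has_unique_signature_def signatures_def by blast
qed

lemma r_lam_eq: "r_lam l = (\<lambda>x y. (x^6 - y^6) - 15 * (1/5 - l) * (x^4 * y^2 - x^2 * y^4))"
  unfolding r_lam_def by (intro ext) algebra

lemma badge_r_lam_one_fifth: "(1, 1) \<in> badges (r_lam (1/5))"
proof -
  define ts :: "term6 list" where "ts = [(1, 1, 0), (-1, 0, 1)]"
  have "represents (r_lam (1/5)) ts"
    by (simp add: represents_def ts_def r_lam_eq)
  moreover have "honest ts"
    by (simp add: honest_iff nonproportional_def ts_def)
  moreover have "badge ts = (1, 1)"
    by (simp add: badge_def ts_def)
  ultimately show ?thesis
    by (rule badgesI)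
qed

lemma badge_r_lam_zero: "(3, 3) \<in> badges (r_lam 0)"
proof -
  define ts :: "term6 list" where
    "ts = [(259/5250, 1, 2), (-259/5250, 2, 1), (13/5250, 1, -2), (-13/5250, -2, 1),
           (-41/7000, 1, 3), (41/7000, 3, 1)]"
  have "r_lam 0 x y = 259/5250 * ((x + 2*y)^6 - (2*x + y)^6) + 13/5250 * ((x - 2*y)^6 - (-2*x + y)^6)
                      - 41/7000 * ((x + 3*y)^6 - (3*x + y)^6)" for x y
    unfolding r_lam_def by algebra
  then have "represents (r_lam 0) ts"
    by (simp add: represents_def ts_def algebra_simps)
  moreover have "honest ts"
    by (simp add: honest_iff nonproportional_def ts_def)
  moreover have "badge ts = (3, 3)"
    by (simp add: badge_def ts_def)
  ultimately show ?thesis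
    by (rule badgesI)
qed

(* The antisymmetric pair (x + t y)^6 - (t x + y)^6 only depends on t through z = t + 1/t. *)
definition E :: "real \<Rightarrow> real \<Rightarrow> real \<Rightarrow> real" where
  "E z x y = (z^2 - 1) * (x^6 - y^6) + 6 * z * (x^5 * y - x * y^5) + 15 * (x^4 * y^2 - x^2 * y^4)"

lemma power_pair_difference:
  assumes "t \<noteq> 0"
  shows "(x + t * y)^6 - (t * x + y)^6 = t^2 * (1 - t^2) * E (t + 1/t) x y"
  using assms unfolding E_def by (simp add: field_simps) algebra

(* Two values z1, z2 with c (z1 z2 + 1) = 1 eliminate the x^5 y term. *)
lemma E_combination:
  assumes "c * (z1 * z2 + 1) = 1"
  shows "(- c * z2) * E z1 x y + (c * z1) * E z2 x y
           = (z2 - z1) * ((x^6 - y^6) - 15 * c * (x^4 * y^2 - x^2 * y^4))"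
  using assms unfolding E_def by algebra

lemma reciprocal_sum_solvable:
  assumes "z > 2"
  obtains t :: real where "t > 1" "t + 1/t = z"
proof -
  define t where "t = (z + sqrt (z^2 - 4)) / 2"
  have "2^2 < z^2"
    using assms by (intro power_strict_mono) auto
  then have root: "sqrt (z^2 - 4) ^ 2 = z^2 - 4" "sqrt (z^2 - 4) > 0"
    by simp_all
  then have "2 < z + sqrt (z^2 - 4)"
    using assms by linarith
  then have "t > 1"
    unfolding t_def by simp
  moreover have "t^2 - z * t + 1 = 0"
    using root unfolding t_def by (simp add: field_simps power2_eq_square)
  then have "t + 1/t = z"
    using \<open>t > 1\<close> by (simp add: field_simps power2_eq_square)
  ultimately show ?thesis
    using that by blast
qed

lemma two_pairs_representation:
  assumes z1: "2 < z1" and z12: "z1 < z2" and c: "c * (z1 * z2 + 1) = 1"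
  shows "(2, 2) \<in> badges (\<lambda>x y. (x^6 - y^6) - 15 * c * (x^4 * y^2 - x^2 * y^4))"
proof -
  obtain t where t: "t > 1" "t + 1/t = z1"
    using reciprocal_sum_solvable z1 by blast
  obtain s where s: "s > 1" "s + 1/s = z2"
    using reciprocal_sum_solvable z1 z12 by (metis less_trans)
  have products: "1 < t * t" "1 < s * s" "1 < t * s" "1 < s * t"
    using t(1) s(1) by (simp_all add: less_1_mult)
  then have dt: "t^2 * (1 - t^2) \<noteq> 0" and ds: "s^2 * (1 - s^2) \<noteq> 0"
    using t(1) s(1) by (simp_all add: power2_eq_square)
  define w1 where "w1 = - c * z2 / ((z2 - z1) * (t^2 * (1 - t^2)))"
  define w2 where "w2 = c * z1 / ((z2 - z1) * (s^2 * (1 - s^2)))"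
  have "c \<noteq> 0"
    using c by auto
  then have "w1 \<noteq> 0" "w2 \<noteq> 0"
    using z1 z12 dt ds by (simp_all add: w1_def w2_def)
  define ts where "ts = [(w1, 1, t), (-w1, t, 1), (w2, 1, s), (-w2, s, 1)]"
  have weights: "w1 * (t^2 * (1 - t^2)) = - c * z2 / (z2 - z1)" "w2 * (s^2 * (1 - s^2)) = c * z1 / (z2 - z1)"
    using dt ds by (simp_all add: w1_def w2_def)
  have "(\<Sum>u\<leftarrow>ts. fst u * (fst (snd u) * x + snd (snd u) * y) ^ 6)
          = (x^6 - y^6) - 15 * c * (x^4 * y^2 - x^2 * y^4)" for x y
  proof -
    have "(\<Sum>u\<leftarrow>ts. fst u * (fst (snd u) * x + snd (snd u) * y) ^ 6)
          = w1 * ((x + t*y)^6 - (t*x + y)^6) + w2 * ((x + s*y)^6 - (s*x + y)^6)"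
      by (simp add: ts_def algebra_simps)
    also have "\<dots> = (w1 * (t^2 * (1 - t^2))) * E z1 x y + (w2 * (s^2 * (1 - s^2))) * E z2 x y"
      using t s power_pair_difference[of t x y] power_pair_difference[of s x y] by (simp add: mult.assoc)
    also have "\<dots> = ((- c * z2) * E z1 x y + (c * z1) * E z2 x y) / (z2 - z1)"
      unfolding weights by (simp add: diff_divide_distrib)
    also have "\<dots> = (x^6 - y^6) - 15 * c * (x^4 * y^2 - x^2 * y^4)"
      using E_combination[OF c, of x y] z12 by simp
    finally show ?thesis .
  qed
  then have "represents (\<lambda>x y. (x^6 - y^6) - 15 * c * (x^4 * y^2 - x^2 * y^4)) ts"
    using \<open>w1 \<noteq> 0\<close> \<open>w2 \<noteq> 0\<close> by (simp add: represents_def ts_def)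
  moreover have "honest ts"
  proof -
    have "t \<noteq> s"
      using t s z12 by auto
    then have "t * t \<noteq> 1" "s * s \<noteq> 1" "t * s \<noteq> 1" "s * t \<noteq> 1" "t \<noteq> s"
      using products by linarith+
    then show ?thesis
      by (auto simp: honest_iff nonproportional_def ts_def)
  qed
  moreover have "badge ts = (2, 2)"
    using \<open>w1 \<noteq> 0\<close> \<open>w2 \<noteq> 0\<close> by (auto simp: badge_def ts_def)
  ultimately show ?thesis
    by (rule badgesI)
qed

(* For 0 < l < 1/5 choose 2 < z1 < sqrt P < z2 with z1 z2 = P = 1/c - 1, c = 1/5 - l. *)
lemma badge_r_lam_interior:
  assumes "0 < l" "l < 1/5"
  shows "(2, 2) \<in> badges (r_lam l)"
proof -
  define c where "c = 1/5 - l"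
  define P where "P = 1/c - 1"
  have "0 < c" "c < 1/5"
    using assms by (simp_all add: c_def)
  then have "5 < 1/c"
    by (simp add: less_divide_eq)
  then have "2^2 < P"
    by (simp add: P_def)
  then have root: "2 < sqrt P"
    by (rule real_less_rsqrt)
  define z1 where "z1 = (2 + sqrt P) / 2"
  define z2 where "z2 = P / z1"
  have z1: "2 < z1" "z1 < sqrt P"
    using root by (simp_all add: z1_def)
  have "z1 * z1 < sqrt P * sqrt P"
    using z1 root \<open>2^2 < P\<close> by (intro mult_strict_mono) auto
  also have "\<dots> = P"
    using \<open>2^2 < P\<close> by simp
  finally have "z1 < z2"
    using z1 by (simp add: z2_def less_divide_eq)
  moreover have "c * (z1 * z2 + 1) = 1"
    using z1 \<open>0 < c\<close> by (simp add: z2_def P_def field_simps)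
  ultimately have "(2, 2) \<in> badges (\<lambda>x y. (x^6 - y^6) - 15 * c * (x^4 * y^2 - x^2 * y^4))"
    by (rule two_pairs_representation[OF z1(1)])
  then show ?thesis
    unfolding r_lam_eq c_def .
qed

theorem mainTheorem16:
  shows "has_unique_signature (r_lam 0) (3, 3)
       \<and> has_unique_signature (r_lam (1/5)) (1, 1)
       \<and> (\<forall>l::real. 0 < l \<and> l < 1/5 \<longrightarrow> has_unique_signature (r_lam l) (2, 2))"
proof (intro conjI allI impI)
  show "has_unique_signature (r_lam 0) (3, 3)"
    using unique_signature_intro[OF badge_r_lam_zero] badge_lower_bound cubic_witnesses_zero
    by blast
  show "has_unique_signature (r_lam (1/5)) (1, 1)"
    using unique_signature_intro[OF badge_r_lam_one_fifth] badge_lower_bound cubic_witnesses_one_fifth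
    by blast
  fix l :: real
  assume "0 < l \<and> l < 1/5"
  then show "has_unique_signature (r_lam l) (2, 2)"
    using unique_signature_intro[OF badge_r_lam_interior] badge_lower_bound cubic_witnesses_interior
    by auto
qed

end
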